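(* Let $R$ be a Dedekind domain, $I\subseteq R$ an ideal with $R/I$ finite, and $G\in R^{n\times n}$. Let $U,V\in\mathrm{GL}_n(R/I)$ and $d_1,\ldots,d_n\in R$ with $d_{i+1}R+I\subseteq d_iR+I$ for every $i$ be such that $G\equiv U D V\bmod I$ with $D=\mathrm{diag}(d_1,\ldots,d_n)$. Consider a random symmetric $n\times n$ matrix $X\in R^{n\times n}$ whose upper-triangular entries $\{X_{i,j}:i\leq j\}$ have independent and uniformly distributed reductions in $R/I$. Then $$\mathbb{P}\bigl(G^{T}XG\equiv 0\bmod I\bigr)=\prod_{i=1}^n\prod_{j=i}^n\frac{\mathcal{N}_R(d_id_jR+I)}{\mathcal{N}_R(I)}.$$
   Context: The norm of an ideal $J\subseteq R$ is $\mathcal{N}_R(J)=\#(R/J)$. Such $U,V,d_1,\ldots,d_n$ (a Smith normal form of $G$ over $R/I$) always exist since $R/I$ is a principal ideal ring. *)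

theory Defs
  imports "HOL-Computational_Algebra.Polynomial" "HOL-Computational_Algebra.Fraction_Field"
    "HOL-Probability.Probability_Mass_Function" "Jordan_Normal_Form.Matrix"
begin

definition is_ideal :: "'a::comm_ring_1 set \<Rightarrow> bool" where
  "is_ideal J \<longleftrightarrow> 0 \<in> J \<and> (\<forall>x\<in>J. \<forall>y\<in>J. x + y \<in> J) \<and> (\<forall>x\<in>J. \<forall>r. r * x \<in> J)"

definition prime_ideal :: "'a::comm_ring_1 set \<Rightarrow> bool" where
  "prime_ideal P \<longleftrightarrow> is_ideal P \<and> P \<noteq> UNIV \<and> (\<forall>a b. a * b \<in> P \<longrightarrow> a \<in> P \<or> b \<in> P)"

definition maximal_ideal :: "'a::comm_ring_1 set \<Rightarrow> bool" where
  "maximal_ideal M \<longleftrightarrow> is_ideal M \<and> M \<noteq> UNIV \<and>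
     (\<forall>J. is_ideal J \<and> M \<subseteq> J \<longrightarrow> J = M \<or> J = UNIV)"

definition noetherian_ring :: "'a::comm_ring_1 itself \<Rightarrow> bool" where
  "noetherian_ring _ \<longleftrightarrow> (\<forall>J::'a set. is_ideal J \<longrightarrow>
     (\<exists>gs. J = {\<Sum>i<length gs. r i * gs ! i | r. True}))"

definition integrally_closed :: "'a::idom itself \<Rightarrow> bool" where
  "integrally_closed _ \<longleftrightarrow> (\<forall>(p::'a poly) (x::'a fract).
     lead_coeff p = 1 \<and> poly (map_poly (\<lambda>a. Fraction_Field.Fract a 1) p) x = 0 \<longrightarrow> (\<exists>a. x = Fraction_Field.Fract a 1))"

definition dedekind_domain :: "'a::idom itself \<Rightarrow> bool" where
  "dedekind_domain T \<longleftrightarrow> noetherian_ring T \<and> integrally_closed T \<and>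
     (\<forall>P::'a set. prime_ideal P \<and> P \<noteq> {0} \<longrightarrow> maximal_ideal P)"

definition coset :: "'a::comm_ring_1 set \<Rightarrow> 'a \<Rightarrow> 'a set" where
  "coset J x = {y. y - x \<in> J}"

definition quot :: "'a::comm_ring_1 set \<Rightarrow> 'a set set" where
  "quot J = range (coset J)"

definition ideal_norm :: "'a::comm_ring_1 set \<Rightarrow> nat" where
  "ideal_norm J = card (quot J)"

definition princ_plus :: "'a::comm_ring_1 \<Rightarrow> 'a set \<Rightarrow> 'a set" where
  "princ_plus d J = {d * r + x | r x. x \<in> J}"

definition cong_mat :: "'a::comm_ring_1 set \<Rightarrow> 'a mat \<Rightarrow> 'a mat \<Rightarrow> bool" where
  "cong_mat J A B \<longleftrightarrow> dim_row A = dim_row B \<and> dim_col A = dim_col B \<and>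
     (\<forall>i<dim_row A. \<forall>j<dim_col A. A $$ (i, j) - B $$ (i, j) \<in> J)"

text \<open>A matrix over R representing an element of GL_n(R/J): invertible modulo J.\<close>
definition invertible_mod :: "'a::comm_ring_1 set \<Rightarrow> nat \<Rightarrow> 'a mat \<Rightarrow> bool" where
  "invertible_mod J n U \<longleftrightarrow> U \<in> carrier_mat n n \<and>
     (\<exists>W \<in> carrier_mat n n. cong_mat J (U * W) (1\<^sub>m n) \<and> cong_mat J (W * U) (1\<^sub>m n))"

definition diag_of :: "nat \<Rightarrow> (nat \<Rightarrow> 'a::zero) \<Rightarrow> 'a mat" where
  "diag_of n d = mat n n (\<lambda>(i, j). if i = j then d i else 0)"

definition upper_idx :: "nat \<Rightarrow> (nat \<times> nat) set" where
  "upper_idx n = {(i, j). i \<le> j \<and> j < n}"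

definition upper_red :: "'a::comm_ring_1 set \<Rightarrow> nat \<Rightarrow> 'a mat \<Rightarrow> (nat \<times> nat \<Rightarrow> 'a set)" where
  "upper_red J n X = restrict (\<lambda>(i, j). coset J (X $$ (i, j))) (upper_idx n)"

end

theory Submission
  imports Defs
begin

text \<open>
  Then
  \<open>G\<^sup>T X G \<equiv> V\<^sup>T D (U\<^sup>T X U) D V\<close>, and since \<open>V\<close> is invertible modulo \<open>I\<close> this vanishes iff
  \<open>D Y D \<equiv> 0\<close> for \<open>Y = U\<^sup>T X U\<close>, i.e. iff \<open>d\<^sub>i d\<^sub>j Y\<^sub>i\<^sub>j \<in> I\<close> for all \<open>i \<le> j\<close>. As \<open>U\<close> is invertible
  modulo \<open>I\<close>, \<open>X \<mapsto> U\<^sup>T X U\<close> permutes the symmetric matrices over \<open>R/I\<close>, so \<open>Y\<close> is uniformly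
  distributed as well and the upper entries \<open>Y\<^sub>i\<^sub>j\<close> are independent. Finally the annihilator of
  \<open>a\<close> in \<open>R/I\<close> is the kernel of multiplication by \<open>a\<close>, whose image is \<open>(aR + I)/I\<close>; so it
  has \<open>\<N>(aR + I)\<close> elements, which gives the factor \<open>\<N>(d\<^sub>id\<^sub>jR + I)/\<N>(I)\<close> for each \<open>i \<le> j\<close>.
\<close>

lemma ideal_zero: "is_ideal I \<Longrightarrow> 0 \<in> I"
  by (simp add: is_ideal_def)

lemma ideal_add: "is_ideal I \<Longrightarrow> x \<in> I \<Longrightarrow> y \<in> I \<Longrightarrow> x + y \<in> I"
  by (simp add: is_ideal_def)

lemma ideal_mult_left: "is_ideal I \<Longrightarrow> x \<in> I \<Longrightarrow> r * x \<in> I"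
  by (simp add: is_ideal_def)

lemma ideal_mult_right: "is_ideal I \<Longrightarrow> x \<in> I \<Longrightarrow> x * r \<in> I"
  by (metis ideal_mult_left mult.commute)

lemma ideal_uminus: "is_ideal I \<Longrightarrow> x \<in> I \<Longrightarrow> - x \<in> I"
  by (metis ideal_mult_left mult_minus1)

lemma ideal_diff_commute: "is_ideal I \<Longrightarrow> x - y \<in> I \<Longrightarrow> y - x \<in> I"
  by (metis ideal_uminus minus_diff_eq)

lemma ideal_diff_trans: "is_ideal I \<Longrightarrow> x - y \<in> I \<Longrightarrow> y - z \<in> I \<Longrightarrow> x - z \<in> I"
  by (metis ideal_add diff_add_eq add_diff_cancel_left' diff_add_cancel add.commute)

lemma ideal_sum: "is_ideal I \<Longrightarrow> (\<And>x. x \<in> A \<Longrightarrow> f x \<in> I) \<Longrightarrow> sum f A \<in> I"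
  by (induction A rule: infinite_finite_induct) (auto simp: ideal_zero ideal_add)

lemma card_bij_betw_preimage:
  assumes "bij_betw f T T" and "A \<subseteq> T"
  shows "card {x \<in> T. f x \<in> A} = card A"
proof -
  have "f ` {x \<in> T. f x \<in> A} = A"
    using assms by (auto simp: bij_betw_def)
  moreover have "inj_on f {x \<in> T. f x \<in> A}"
    using assms by (auto simp: bij_betw_def intro: inj_on_subset)
  ultimately show ?thesis
    by (metis card_image)
qed

lemma is_ideal_princ_plus:
  assumes I: "is_ideal I"
  shows "is_ideal (princ_plus a I)"
  unfolding is_ideal_def
proof (intro conjI ballI allI)
  show "0 \<in> princ_plus a I"
    unfolding princ_plus_def using ideal_zero[OF I] by (auto intro!: exI[where x = 0])
next
  fix x y assume "x \<in> princ_plus a I" "y \<in> princ_plus a I"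
  then obtain r u r' u' where "u \<in> I" "u' \<in> I" "x = a * r + u" "y = a * r' + u'"
    unfolding princ_plus_def by auto
  then have "x + y = a * (r + r') + (u + u')" "u + u' \<in> I"
    using ideal_add[OF I] by (auto simp: algebra_simps)
  then show "x + y \<in> princ_plus a I"
    unfolding princ_plus_def by blast
next
  fix x s assume "x \<in> princ_plus a I"
  then obtain r u where "u \<in> I" "x = a * r + u"
    unfolding princ_plus_def by auto
  then have "s * x = a * (s * r) + s * u" "s * u \<in> I"
    using ideal_mult_left[OF I \<open>u \<in> I\<close>] by (auto simp: algebra_simps)
  then show "s * x \<in> princ_plus a I"
    unfolding princ_plus_def by blast
qed

lemma subset_princ_plus: "I \<subseteq> princ_plus a I"
  unfolding princ_plus_def by (auto intro: exI[where x = 0])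

lemma coset_eq_iff:
  assumes I: "is_ideal I"
  shows "coset I x = coset I y \<longleftrightarrow> x - y \<in> I"
proof
  assume "coset I x = coset I y"
  then have "y \<in> coset I x"
    by (simp add: coset_def ideal_zero[OF I])
  then show "x - y \<in> I"
    by (simp add: coset_def ideal_diff_commute[OF I])
qed (auto simp: coset_def intro: ideal_diff_trans[OF I] ideal_diff_commute[OF I])

lemma coset_in_quot: "coset I x \<in> quot I"
  by (simp add: quot_def)

lemma image_plus_coset: "(\<lambda>x. x + y) ` coset I z = coset I (z + y)"
  unfolding coset_def
  by (auto simp: image_iff intro!: exI[where x = "_ - y"]) (auto simp: algebra_simps)

definition coset_repr :: "'a set \<Rightarrow> 'a" where
  "coset_repr c = (SOME x. x \<in> c)"

lemma coset_repr_diff: "is_ideal I \<Longrightarrow> coset_repr (coset I x) - x \<in> I"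
  using someI[of "\<lambda>y. y \<in> coset I x" x]
  by (simp add: coset_repr_def coset_def ideal_zero)

lemma coset_coset_repr: "is_ideal I \<Longrightarrow> c \<in> quot I \<Longrightarrow> coset I (coset_repr c) = c"
  unfolding quot_def using coset_repr_diff coset_eq_iff by fastforce

text \<open>Lagrange's theorem for \<open>K/I \<subseteq> R/I\<close>, with \<open>R/K\<close> presented as the image of \<open>g\<close>.\<close>

lemma card_quot_eq_mult:
  fixes I K :: "'a::comm_ring_1 set" and g :: "'a \<Rightarrow> 'b"
  assumes I: "is_ideal I" and fin: "finite (quot I)" and IK: "I \<subseteq> K"
    and g: "\<And>x y. g x = g y \<longleftrightarrow> x - y \<in> K"
  shows "card (quot I) = card (coset I ` K) * card (range g)"
proof -
  define \<Phi> where "\<Phi> c = g (coset_repr c)" for c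
  have \<Phi>_coset: "\<Phi> (coset I y) = g y" for y
    unfolding \<Phi>_def using g IK coset_repr_diff[OF I, of y] by blast
  have range_g: "range g = \<Phi> ` quot I"
    unfolding quot_def using \<Phi>_coset by (auto simp: image_iff)
  have fibre: "{c \<in> quot I. \<Phi> c = g y} = image (\<lambda>x. x + y) ` (coset I ` K)" for y
  proof -
    have "{c \<in> quot I. \<Phi> c = g y} = coset I ` ((\<lambda>x. x + y) ` K)"
      unfolding quot_def using \<Phi>_coset g by (auto simp: image_iff intro!: bexI[where x = "_ - y"])
    then show ?thesis
      by (simp add: image_image image_plus_coset)
  qed
  have card_fibre: "card {c \<in> quot I. \<Phi> c = z} = card (coset I ` K)" if z: "z \<in> range g" for z
  proof -
    obtain y where "z = g y"
      using z by blast
    moreover have "inj_on (image (\<lambda>x. x + y)) (coset I ` K)"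
      by (rule inj_onI) (simp add: inj_image_eq_iff inj_def)
    ultimately show ?thesis
      using fibre by (simp add: card_image)
  qed
  have "quot I = (\<Union>z \<in> range g. {c \<in> quot I. \<Phi> c = z})"
    using range_g by auto
  also have "card \<dots> = (\<Sum>z \<in> range g. card {c \<in> quot I. \<Phi> c = z})"
    using fin range_g by (intro card_UN_disjoint) auto
  finally show ?thesis
    using card_fibre by simp
qed

definition quot_annihilator :: "'a::comm_ring_1 set \<Rightarrow> 'a \<Rightarrow> 'a set set" where
  "quot_annihilator J a = coset J ` {x. a * x \<in> J}"

lemma quot_annihilator_subset: "quot_annihilator J a \<subseteq> quot J"
  by (auto simp: quot_annihilator_def coset_in_quot)

lemma coset_in_quot_annihilator_iff:
  assumes I: "is_ideal I"
  shows "coset I y \<in> quot_annihilator I a \<longleftrightarrow> a * y \<in> I"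
proof
  assume "coset I y \<in> quot_annihilator I a"
  then obtain x where "a * x \<in> I" "y - x \<in> I"
    by (auto simp: quot_annihilator_def coset_eq_iff[OF I])
  then have "a * x + a * (y - x) \<in> I"
    using ideal_add[OF I] ideal_mult_left[OF I] by blast
  then show "a * y \<in> I"
    by (simp add: algebra_simps)
qed (auto simp: quot_annihilator_def)

lemma card_quot_annihilator:
  fixes I :: "'a::comm_ring_1 set"
  assumes I: "is_ideal I" and fin: "finite (quot I)"
  shows "card (quot_annihilator I a) = ideal_norm (princ_plus a I)"
proof -
  define J where "J = princ_plus a I"
  define K where "K = {x. a * x \<in> I}"
  have J: "is_ideal J"
    unfolding J_def by (rule is_ideal_princ_plus[OF I])
  have by_J: "card (quot I) = card (coset I ` J) * card (quot J)"
    unfolding quot_def[of J]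
    by (rule card_quot_eq_mult[OF I fin subset_princ_plus[of I a, folded J_def]])
      (rule coset_eq_iff[OF J])
  have multiple_in_J: "a * x \<in> J" for x
    unfolding J_def princ_plus_def using ideal_zero[OF I] by force
  have multiple_image: "range (\<lambda>x. coset I (a * x)) = coset I ` J"
  proof (intro equalityI subsetI)
    fix c assume "c \<in> coset I ` J"
    then obtain r u where "u \<in> I" "c = coset I (a * r + u)"
      unfolding J_def princ_plus_def by auto
    then have "c = coset I (a * r)"
      by (simp add: coset_eq_iff[OF I])
    then show "c \<in> range (\<lambda>x. coset I (a * x))"
      by blast
  qed (use multiple_in_J in auto)
  have by_K: "card (quot I) = card (coset I ` K) * card (coset I ` J)"
    unfolding multiple_image[symmetric] using ideal_mult_left[OF I]
    by (intro card_quot_eq_mult[OF I fin]) (auto simp: K_def coset_eq_iff[OF I] right_diff_distrib)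
  have "finite (coset I ` J)"
    by (rule finite_subset[OF _ fin]) (auto simp: coset_in_quot)
  then have "card (coset I ` J) > 0"
    using ideal_zero[OF J] by (auto simp: card_gt_0_iff)
  then show ?thesis
    using by_J by_K by (simp add: quot_annihilator_def ideal_norm_def J_def K_def)
qed

lemma cong_mat_refl: "is_ideal I \<Longrightarrow> cong_mat I A A"
  by (simp add: cong_mat_def ideal_zero)

lemma cong_mat_sym: "is_ideal I \<Longrightarrow> cong_mat I A B \<Longrightarrow> cong_mat I B A"
  by (auto simp: cong_mat_def intro: ideal_diff_commute)

lemma cong_mat_trans: "is_ideal I \<Longrightarrow> cong_mat I A B \<Longrightarrow> cong_mat I B C \<Longrightarrow> cong_mat I A C"
  unfolding cong_mat_def by (metis ideal_diff_trans)

lemma cong_mat_transpose: "cong_mat I A B \<Longrightarrow> cong_mat I (transpose_mat A) (transpose_mat B)"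
  by (auto simp: cong_mat_def)

lemma cong_mat_mult:
  assumes I: "is_ideal I" and AA: "cong_mat I A A'" and BB: "cong_mat I B B'"
    and dim: "dim_col A = dim_row B"
  shows "cong_mat I (A * B) (A' * B')"
  unfolding cong_mat_def
proof (intro conjI allI impI)
  show "dim_row (A * B) = dim_row (A' * B')" "dim_col (A * B) = dim_col (A' * B')"
    using AA BB by (auto simp: cong_mat_def)
  fix i j assume i: "i < dim_row (A * B)" and j: "j < dim_col (A * B)"
  have dims: "dim_row A' = dim_row A" "dim_col A' = dim_col A"
    "dim_row B' = dim_row B" "dim_col B' = dim_col B"
    using AA BB by (auto simp: cong_mat_def)
  have "(A * B) $$ (i, j) - (A' * B') $$ (i, j) = (\<Sum>k \<in> {0..<dim_row B}.
      (A $$ (i, k) - A' $$ (i, k)) * B $$ (k, j) + A' $$ (i, k) * (B $$ (k, j) - B' $$ (k, j)))"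
    using i j dim dims by (simp add: scalar_prod_def sum_subtractf[symmetric] algebra_simps)
  also have "\<dots> \<in> I"
  proof (rule ideal_sum[OF I])
    fix k assume "k \<in> {0..<dim_row B}"
    then have "A $$ (i, k) - A' $$ (i, k) \<in> I" "B $$ (k, j) - B' $$ (k, j) \<in> I"
      using AA BB i j dim by (auto simp: cong_mat_def)
    then show "(A $$ (i, k) - A' $$ (i, k)) * B $$ (k, j) + A' $$ (i, k) * (B $$ (k, j) - B' $$ (k, j)) \<in> I"
      using I by (intro ideal_add ideal_mult_left ideal_mult_right)
  qed
  finally show "(A * B) $$ (i, j) - (A' * B') $$ (i, j) \<in> I" .
qed

lemma cong_mat_congruence:
  assumes I: "is_ideal I" and V: "V \<in> carrier_mat n n"
    and Z: "Z \<in> carrier_mat n n" and ZZ: "cong_mat I Z Z'"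
  shows "cong_mat I (transpose_mat V * Z * V) (transpose_mat V * Z' * V)"
  using V Z by (intro cong_mat_mult[OF I] cong_mat_refl[OF I] ZZ) auto

text \<open>Conjugating by the right inverse \<open>W\<close> undoes the conjugation by \<open>V\<close>.\<close>

lemma cong_mat_congruence_iff:
  fixes V W Z Z' :: "'a::comm_ring_1 mat"
  assumes I: "is_ideal I" and V: "V \<in> carrier_mat n n" and W: "W \<in> carrier_mat n n"
    and VW: "cong_mat I (V * W) (1\<^sub>m n)"
    and Z: "Z \<in> carrier_mat n n" and Z': "Z' \<in> carrier_mat n n"
  shows "cong_mat I (transpose_mat V * Z * V) (transpose_mat V * Z' * V) \<longleftrightarrow> cong_mat I Z Z'"
proof
  assume VZV: "cong_mat I (transpose_mat V * Z * V) (transpose_mat V * Z' * V)"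
  have undo: "cong_mat I (transpose_mat W * (transpose_mat V * Y * V) * W) Y"
    if Y: "Y \<in> carrier_mat n n" for Y
  proof -
    have "cong_mat I (transpose_mat (V * W) * Y * (V * W)) (transpose_mat (1\<^sub>m n) * Y * 1\<^sub>m n)"
      using V W Y by (intro cong_mat_mult[OF I] cong_mat_refl[OF I] cong_mat_transpose VW) auto
    moreover have "transpose_mat (V * W) * Y * (V * W) = transpose_mat W * (transpose_mat V * Y * V) * W"
      using V W Y by (simp add: transpose_mult[OF V W] assoc_mult_mat[of _ n n _ n _ n])
    ultimately show ?thesis
      using Y by simp
  qed
  have "cong_mat I (transpose_mat W * (transpose_mat V * Z * V) * W)
      (transpose_mat W * (transpose_mat V * Z' * V) * W)"
    using V W Z by (intro cong_mat_congruence[OF I W] VZV) auto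
  then show "cong_mat I Z Z'"
    using undo[OF Z] undo[OF Z'] by (meson cong_mat_sym cong_mat_trans I)
qed (rule cong_mat_congruence[OF I V Z])

text \<open>A symmetric lift to \<open>R\<close> of residues indexed by the upper triangle: a section of \<^const>\<open>upper_red\<close>.\<close>

definition sym_lift :: "nat \<Rightarrow> (nat \<times> nat \<Rightarrow> 'a set) \<Rightarrow> 'a mat" where
  "sym_lift n f = mat n n (\<lambda>(i, j). coset_repr (f (min i j, max i j)))"

lemma sym_lift_carrier: "sym_lift n f \<in> carrier_mat n n"
  by (simp add: sym_lift_def)

lemma transpose_sym_lift: "transpose_mat (sym_lift n f) = sym_lift n f"
  by (rule eq_matI) (auto simp: sym_lift_def min.commute max.commute)

lemma upper_idx_eq_Sigma: "upper_idx n = Sigma {..<n} (\<lambda>i. {i..<n})"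
  by (auto simp: upper_idx_def)

lemma upper_red_in_PiE_iff:
  "upper_red I n X \<in> PiE (upper_idx n) B \<longleftrightarrow> (\<forall>x \<in> upper_idx n. coset I (X $$ x) \<in> B x)"
  by (simp add: upper_red_def Pi_iff case_prod_beta)

lemma upper_red_in_PiE: "upper_red I n X \<in> PiE (upper_idx n) (\<lambda>_. quot I)"
  by (simp add: upper_red_in_PiE_iff coset_in_quot)

lemma upper_red_sym_lift:
  assumes I: "is_ideal I" and f: "f \<in> PiE (upper_idx n) (\<lambda>_. quot I)"
  shows "upper_red I n (sym_lift n f) = f"
proof
  fix x
  show "upper_red I n (sym_lift n f) x = f x"
  proof (cases "x \<in> upper_idx n")
    case True
    then obtain i j where "x = (i, j)" "i \<le> j" "j < n"
      by (auto simp: upper_idx_def)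
    then show ?thesis
      using f True coset_coset_repr[OF I] by (auto simp: upper_red_def sym_lift_def)
  qed (use f in \<open>auto simp: upper_red_def\<close>)
qed

lemma upper_red_cong_mat:
  assumes I: "is_ideal I" and XY: "cong_mat I X Y" and X: "X \<in> carrier_mat n n"
  shows "upper_red I n X = upper_red I n Y"
  unfolding upper_red_def
  using XY X by (intro restrict_ext) (auto simp: upper_idx_def cong_mat_def coset_eq_iff[OF I])

lemma symmetric_mat_index:
  "Y \<in> carrier_mat n n \<Longrightarrow> transpose_mat Y = Y \<Longrightarrow> i < n \<Longrightarrow> j < n \<Longrightarrow> Y $$ (j, i) = Y $$ (i, j)"
  by (metis carrier_matD index_transpose_mat(1))

lemma cong_mat_sym_lift_upper_red:
  assumes I: "is_ideal I" and Y: "Y \<in> carrier_mat n n" and sym: "transpose_mat Y = Y"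
  shows "cong_mat I Y (sym_lift n (upper_red I n Y))"
  unfolding cong_mat_def
proof (intro conjI allI impI)
  show "dim_row Y = dim_row (sym_lift n (upper_red I n Y))"
    "dim_col Y = dim_col (sym_lift n (upper_red I n Y))"
    using Y by (auto simp: sym_lift_def)
  fix i j assume i: "i < dim_row Y" and j: "j < dim_col Y"
  have "(min i j, max i j) \<in> upper_idx n" "Y $$ (min i j, max i j) = Y $$ (i, j)"
    using symmetric_mat_index[OF Y sym] i j Y by (auto simp: upper_idx_def min_def max_def)
  then have "sym_lift n (upper_red I n Y) $$ (i, j) = coset_repr (coset I (Y $$ (i, j)))"
    using i j Y by (simp add: sym_lift_def upper_red_def)
  then show "Y $$ (i, j) - sym_lift n (upper_red I n Y) $$ (i, j) \<in> I"
    using coset_repr_diff[OF I] ideal_diff_commute[OF I] by metis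
qed

lemma ball_upper_idx_iff:
  assumes "\<And>i j. i < n \<Longrightarrow> j < n \<Longrightarrow> Q i j \<longleftrightarrow> Q j i"
  shows "(\<forall>(i, j) \<in> upper_idx n. Q i j) \<longleftrightarrow> (\<forall>i<n. \<forall>j<n. Q i j)"
  using assms by (auto simp: upper_idx_def) (metis le_less_trans nat_le_linear)

lemma index_diag_sandwich:
  assumes Y: "Y \<in> carrier_mat n n" and i: "i < n" and j: "j < n"
  shows "(diag_of n d * Y * diag_of n d) $$ (i, j) = d i * Y $$ (i, j) * d j"
proof -
  have DY: "(diag_of n d * Y) $$ (i, k) = d i * Y $$ (i, k)" if "k < n" for k
    using Y i that
    by (simp add: diag_of_def scalar_prod_def if_distrib[of "\<lambda>x. x * _"] sum.delta cong: if_cong)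
  have "(diag_of n d * Y * diag_of n d) $$ (i, j) =
      (\<Sum>k \<in> {0..<n}. (diag_of n d * Y) $$ (i, k) * (if k = j then d k else 0))"
    using Y i j by (simp add: diag_of_def scalar_prod_def)
  also have "\<dots> = (diag_of n d * Y) $$ (i, j) * d j"
    by (simp add: if_distrib[of "\<lambda>x. _ * x"] sum.delta' j cong: if_cong)
  finally show ?thesis
    using DY[OF j] by simp
qed

lemma diag_sandwich_cong_zero_iff:
  assumes I: "is_ideal I" and Y: "Y \<in> carrier_mat n n" and sym: "transpose_mat Y = Y"
  shows "cong_mat I (diag_of n d * Y * diag_of n d) (0\<^sub>m n n) \<longleftrightarrow>
    upper_red I n Y \<in> PiE (upper_idx n) (\<lambda>(i, j). quot_annihilator I (d i * d j))"
proof -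
  have "diag_of n d \<in> carrier_mat n n"
    by (simp add: diag_of_def)
  then have "diag_of n d * Y * diag_of n d \<in> carrier_mat n n"
    using Y by (metis mult_carrier_mat)
  then have "cong_mat I (diag_of n d * Y * diag_of n d) (0\<^sub>m n n) \<longleftrightarrow>
      (\<forall>i<n. \<forall>j<n. (diag_of n d * Y * diag_of n d) $$ (i, j) \<in> I)"
    by (simp add: cong_mat_def del: index_mult_mat)
  also have "\<dots> \<longleftrightarrow> (\<forall>i<n. \<forall>j<n. d i * d j * Y $$ (i, j) \<in> I)"
    by (simp add: index_diag_sandwich[OF Y] mult_ac)
  also have "\<dots> \<longleftrightarrow> (\<forall>(i, j) \<in> upper_idx n. d i * d j * Y $$ (i, j) \<in> I)"
    using symmetric_mat_index[OF Y sym] by (intro ball_upper_idx_iff[symmetric]) (simp add: mult_ac)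
  also have "\<dots> \<longleftrightarrow> upper_red I n Y \<in> PiE (upper_idx n) (\<lambda>(i, j). quot_annihilator I (d i * d j))"
    by (simp add: upper_red_in_PiE_iff coset_in_quot_annihilator_iff[OF I] case_prod_beta)
  finally show ?thesis .
qed

lemma congruence_cong_zero_iff:
  assumes I: "is_ideal I" and G: "G \<in> carrier_mat n n"
    and U: "U \<in> carrier_mat n n" and V: "invertible_mod I n V"
    and SNF: "cong_mat I G (U * diag_of n d * V)"
    and X: "X \<in> carrier_mat n n" and sym: "transpose_mat X = X"
  shows "cong_mat I (transpose_mat G * X * G) (0\<^sub>m n n) \<longleftrightarrow>
    upper_red I n (transpose_mat U * X * U) \<in> PiE (upper_idx n) (\<lambda>(i, j). quot_annihilator I (d i * d j))"
proof -
  obtain W where Vc: "V \<in> carrier_mat n n" and W: "W \<in> carrier_mat n n" "cong_mat I (V * W) (1\<^sub>m n)"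
    using V by (auto simp: invertible_mod_def)
  define D where "D = diag_of n d"
  define Y where "Y = transpose_mat U * X * U"
  have D: "D \<in> carrier_mat n n" "transpose_mat D = D"
    by (auto simp: D_def diag_of_def)
  have Y: "Y \<in> carrier_mat n n" "transpose_mat Y = Y"
    using U X sym by (auto simp: Y_def transpose_mult[of _ n n _ n] assoc_mult_mat[of _ n n _ n _ n])
  have "cong_mat I (transpose_mat G * X * G) (transpose_mat (U * D * V) * X * (U * D * V))"
    using G X SNF by (intro cong_mat_mult[OF I] cong_mat_refl[OF I] cong_mat_transpose) (auto simp: D_def)
  moreover have "transpose_mat (U * D * V) * X * (U * D * V) = transpose_mat V * (D * Y * D) * V"
    using U D Vc X by (simp add: Y_def transpose_mult[of _ n n _ n] assoc_mult_mat[of _ n n _ n _ n])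
  ultimately have GXG: "cong_mat I (transpose_mat G * X * G) (transpose_mat V * (D * Y * D) * V)"
    by simp
  have "transpose_mat V * 0\<^sub>m n n * V = 0\<^sub>m n n"
    using Vc by simp
  then have "cong_mat I (transpose_mat G * X * G) (0\<^sub>m n n) \<longleftrightarrow>
      cong_mat I (transpose_mat V * (D * Y * D) * V) (transpose_mat V * 0\<^sub>m n n * V)"
    using GXG by (metis I cong_mat_sym cong_mat_trans)
  also have "\<dots> \<longleftrightarrow> cong_mat I (D * Y * D) (0\<^sub>m n n)"
    using D Y by (intro cong_mat_congruence_iff[OF I Vc W]) auto
  also have "\<dots> \<longleftrightarrow> upper_red I n Y \<in> PiE (upper_idx n) (\<lambda>(i, j). quot_annihilator I (d i * d j))"
    unfolding D_def by (rule diag_sandwich_cong_zero_iff[OF I Y])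
  finally show ?thesis
    unfolding Y_def .
qed

lemma congruence_cong_zero_cong_mat:
  assumes I: "is_ideal I" and G: "G \<in> carrier_mat n n"
    and X: "X \<in> carrier_mat n n" and XX: "cong_mat I X X'"
  shows "cong_mat I (transpose_mat G * X * G) (0\<^sub>m n n) \<longleftrightarrow>
    cong_mat I (transpose_mat G * X' * G) (0\<^sub>m n n)"
  using cong_mat_congruence[OF I G X XX] by (meson I cong_mat_sym cong_mat_trans)

lemma bij_betw_upper_red_congruence:
  assumes I: "is_ideal I" and fin: "finite (quot I)" and U: "invertible_mod I n U"
  defines "T \<equiv> PiE (upper_idx n) (\<lambda>_. quot I)"
  shows "bij_betw (\<lambda>f. upper_red I n (transpose_mat U * sym_lift n f * U)) T T"
proof -
  define \<phi> where "\<phi> f = upper_red I n (transpose_mat U * sym_lift n f * U)" for f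
  obtain W where Uc: "U \<in> carrier_mat n n" and W: "W \<in> carrier_mat n n" "cong_mat I (U * W) (1\<^sub>m n)"
    using U by (auto simp: invertible_mod_def)
  have UXU: "transpose_mat U * sym_lift n f * U \<in> carrier_mat n n"
    "transpose_mat (transpose_mat U * sym_lift n f * U) = transpose_mat U * sym_lift n f * U" for f
    using sym_lift_carrier[of n f] transpose_sym_lift[of n f] Uc
    by (auto simp: transpose_mult[of _ n n _ n] assoc_mult_mat[of _ n n _ n _ n])
  have cong_\<phi>: "cong_mat I (transpose_mat U * sym_lift n f * U) (sym_lift n (\<phi> f))" for f
    unfolding \<phi>_def by (rule cong_mat_sym_lift_upper_red[OF I UXU])
  have "inj_on \<phi> T"
  proof (rule inj_onI)
    fix f f' assume "f \<in> T" "f' \<in> T" "\<phi> f = \<phi> f'"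
    then have "cong_mat I (transpose_mat U * sym_lift n f * U) (transpose_mat U * sym_lift n f' * U)"
      using cong_\<phi>[of f] cong_\<phi>[of f'] by (metis cong_mat_sym cong_mat_trans I)
    then have "cong_mat I (sym_lift n f) (sym_lift n f')"
      using cong_mat_congruence_iff[OF I Uc W] sym_lift_carrier by blast
    then have "upper_red I n (sym_lift n f) = upper_red I n (sym_lift n f')"
      using upper_red_cong_mat[OF I] sym_lift_carrier by blast
    then show "f = f'"
      using upper_red_sym_lift[OF I] \<open>f \<in> T\<close> \<open>f' \<in> T\<close> unfolding T_def by metis
  qed
  moreover have "finite T"
    unfolding T_def using fin by (simp add: finite_PiE upper_idx_eq_Sigma)
  moreover have "\<phi> ` T \<subseteq> T"
    unfolding \<phi>_def T_def using upper_red_in_PiE by blast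
  ultimately show ?thesis
    unfolding bij_betw_def \<phi>_def[symmetric] using endo_inj_surj by blast
qed

lemma prob_eq_card_upper_red:
  fixes Xd :: "'a::comm_ring_1 mat pmf"
  assumes I: "is_ideal I"
    and sym: "\<And>X. X \<in> set_pmf Xd \<Longrightarrow> X \<in> carrier_mat n n \<and> transpose_mat X = X"
    and unif: "map_pmf (upper_red I n) Xd = pmf_of_set T"
    and T: "T = PiE (upper_idx n) (\<lambda>_. quot I)" "finite T"
    and E: "\<And>X X'. X \<in> carrier_mat n n \<Longrightarrow> cong_mat I X X' \<Longrightarrow> E X \<longleftrightarrow> E X'"
  shows "measure_pmf.prob Xd {X. E X} = card {f \<in> T. E (sym_lift n f)} / card T"
proof -
  define S where "S = {f \<in> T. E (sym_lift n f)}"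
  have "E X \<longleftrightarrow> upper_red I n X \<in> S" if X: "X \<in> set_pmf Xd" for X
  proof -
    have "E X \<longleftrightarrow> E (sym_lift n (upper_red I n X))"
      using sym[OF X] by (intro E cong_mat_sym_lift_upper_red[OF I]) auto
    then show ?thesis
      by (simp add: S_def T(1) upper_red_in_PiE)
  qed
  then have "measure_pmf.prob Xd {X. E X} = measure_pmf.prob Xd (upper_red I n -` S)"
    by (intro measure_pmf.finite_measure_eq_AE) (auto simp: AE_measure_pmf_iff)
  also have "\<dots> = measure_pmf.prob (pmf_of_set T) S"
    by (simp flip: unif)
  also have "\<dots> = card S / card T"
  proof -
    have "T \<noteq> {}"
      unfolding T(1) quot_def by (simp add: PiE_eq_empty_iff)
    then show ?thesis
      using T(2) by (simp add: measure_pmf_of_set S_def Int_absorb1)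
  qed
  finally show ?thesis
    unfolding S_def .
qed

theorem theorem2p3:
  fixes I :: "'a::idom set" and n :: nat and G U V :: "'a mat" and d :: "nat \<Rightarrow> 'a"
    and Xd :: "'a mat pmf"
  assumes ded: "dedekind_domain TYPE('a)"
    and I: "is_ideal I" and fin: "finite (quot I)"
    and G: "G \<in> carrier_mat n n"
    and U: "invertible_mod I n U" and V: "invertible_mod I n V"
    and chain: "\<And>i. i + 1 < n \<Longrightarrow> princ_plus (d (i + 1)) I \<subseteq> princ_plus (d i) I"
    and SNF: "cong_mat I G (U * diag_of n d * V)"
    and sym: "\<And>X. X \<in> set_pmf Xd \<Longrightarrow> X \<in> carrier_mat n n \<and> transpose_mat X = X"
    and unif: "map_pmf (upper_red I n) Xd = pmf_of_set (PiE (upper_idx n) (\<lambda>_. quot I))"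
  shows "measure_pmf.prob Xd {X. cong_mat I (transpose_mat G * X * G) (0\<^sub>m n n)} =
         (\<Prod>i<n. \<Prod>j\<in>{i..<n}. real (ideal_norm (princ_plus (d i * d j) I)) / real (ideal_norm I))"
proof -
  define T where "T = PiE (upper_idx n) (\<lambda>_. quot I)"
  define A where "A = PiE (upper_idx n) (\<lambda>(i, j). quot_annihilator I (d i * d j))"
  define \<phi> where "\<phi> f = upper_red I n (transpose_mat U * sym_lift n f * U)" for f
  have finite_idx: "finite (upper_idx n)"
    by (simp add: upper_idx_eq_Sigma)
  have finite_T: "finite T"
    unfolding T_def using fin finite_idx by (simp add: finite_PiE)
  have A_subset_T: "A \<subseteq> T"
    unfolding A_def T_def by (rule PiE_mono) (auto intro: quot_annihilator_subset[THEN subsetD])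
  have U_carrier: "U \<in> carrier_mat n n"
    using U by (simp add: invertible_mod_def)
  have "measure_pmf.prob Xd {X. cong_mat I (transpose_mat G * X * G) (0\<^sub>m n n)} =
      card {f \<in> T. cong_mat I (transpose_mat G * sym_lift n f * G) (0\<^sub>m n n)} / card T"
    by (rule prob_eq_card_upper_red[OF I sym unif[folded T_def] T_def finite_T
          congruence_cong_zero_cong_mat[OF I G]])
  also have "{f \<in> T. cong_mat I (transpose_mat G * sym_lift n f * G) (0\<^sub>m n n)} = {f \<in> T. \<phi> f \<in> A}"
    unfolding \<phi>_def A_def
    using congruence_cong_zero_iff[OF I G U_carrier V SNF sym_lift_carrier transpose_sym_lift] by simp
  also have "card {f \<in> T. \<phi> f \<in> A} = card A"
    using bij_betw_upper_red_congruence[OF I fin U, folded T_def \<phi>_def] A_subset_T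
    by (rule card_bij_betw_preimage)
  also have "real (card A) / card T =
      (\<Prod>(i, j) \<in> upper_idx n. real (ideal_norm (princ_plus (d i * d j) I)) / real (ideal_norm I))"
    using finite_idx by (simp add: A_def T_def card_PiE card_quot_annihilator[OF I fin] ideal_norm_def
        prod_dividef case_prod_beta)
  finally show ?thesis
    by (simp add: upper_idx_eq_Sigma prod.Sigma)
qed

end
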